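(* Let $x,y$ be positive real numbers with $x\ne y$. For positive integers $d,d_1,d_2$ define \[ \mu_d=(x+y)^d-x^d-y^d,\quad \omega_d=x^d+y^d-2\left(\tfrac{x+y}{2}\right)^d, \] \[ \psi_{d_1,d_2}=x^{d_1}y^{d_2}+x^{d_2}y^{d_1},\quad \phi_{d_1,d_2}=2\left(\tfrac{x+y}{2}\right)^{d_1+d_2}-x^{d_1}y^{d_2}-x^{d_2}y^{d_1}. \] Let $a,b,s,t$ be positive integers with $a\ge 2$ and $b\ge t\ge s\ge a>\binom{b-a}{2}$. Then \[ \frac{\omega_t}{\mu_t}\le\frac{\omega_a}{\mu_a}<\frac{\phi_{s,t}}{\psi_{s,t}}, \] equivalently $\mu_t\omega_a-\mu_a\omega_t\ge 0$ and $\mu_a\phi_{s,t}-\omega_a\psi_{s,t}>0$. *)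

theory Defs
  imports Complex_Main
begin

definition mu :: "real \<Rightarrow> real \<Rightarrow> nat \<Rightarrow> real" where
  "mu x y d = (x + y) ^ d - x ^ d - y ^ d"

definition omega :: "real \<Rightarrow> real \<Rightarrow> nat \<Rightarrow> real" where
  "omega x y d = x ^ d + y ^ d - 2 * ((x + y) / 2) ^ d"

definition psi :: "real \<Rightarrow> real \<Rightarrow> nat \<Rightarrow> nat \<Rightarrow> real" where
  "psi x y d1 d2 = x ^ d1 * y ^ d2 + x ^ d2 * y ^ d1"

definition phi :: "real \<Rightarrow> real \<Rightarrow> nat \<Rightarrow> nat \<Rightarrow> real" where
  "phi x y d1 d2 = 2 * ((x + y) / 2) ^ (d1 + d2) - x ^ d1 * y ^ d2 - x ^ d2 * y ^ d1"

end

theory Submission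
  imports Defs
begin

text \<open>
  Put M = (x + y) / 2. Then omega_d + mu_d = (2^d - 2) M^d and phi_{s,t} + psi_{s,t} = 2 M^(s+t),
  so both inequalities compare (2^d - 2) M^d / mu_d with 2 M^(s+t) / psi_{s,t}.
  The recurrence mu_{d+1} = (x + y) mu_d + (x^d y + x y^d) together with the Chebyshev-type
  bound mu_{d+1} <= (2^d - 1)(x^d y + x y^d) makes mu_d / ((2^d - 2) M^d) increasing in d,
  which is the first inequality.
  For the second, scale to x = 1 + u, y = 1 - u and put v = u^2, m = t - s. Then
  mu_a >= (2^a - 2)(1 - v), while psi_{s,s+m} = (1 - v)^s ((1 + u)^m + (1 - u)^m) is at most
  2 (1 - v)^s (1 + v)^(m choose 2); as m choose 2 < a <= s, this is below
  2 (1 - v) (1 - v^2)^(a-1) < 2 (1 - v).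
\<close>

lemma mu_Suc: "mu x y (Suc d) = (x + y) * mu x y d + (x ^ d * y + x * y ^ d)"
  unfolding mu_def by (simp add: algebra_simps)

lemma mu_pos:
  assumes "0 < x" "0 < y" "2 \<le> d"
  shows "0 < mu x y d"
  using assms(3)
proof (induction d rule: dec_induct)
  case base
  show ?case using assms by (simp add: mu_def power2_eq_square algebra_simps)
next
  case (step d)
  then show ?case
    unfolding mu_Suc using assms by (intro add_pos_pos mult_pos_pos) auto
qed

lemma power_diff_mult_diff_nonneg:
  fixes x y :: real
  assumes "0 \<le> x" "0 \<le> y"
  shows "0 \<le> (x ^ n - y ^ n) * (x - y)"
proof (cases "x \<le> y")
  case True
  then have "x ^ n \<le> y ^ n" using assms by (intro power_mono)
  then show ?thesis using True by (intro mult_nonpos_nonpos) auto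
next
  case False
  then have "y ^ n \<le> x ^ n" using assms by (intro power_mono) auto
  then show ?thesis using False by simp
qed

lemma mu_Suc_le:
  assumes "0 \<le> x" "0 \<le> y" "1 \<le> d"
  shows "mu x y (Suc d) \<le> (2 ^ d - 1) * (x ^ d * y + x * y ^ d)"
  using assms(3)
proof (induction d rule: dec_induct)
  case base
  show ?case by (simp add: mu_def power2_eq_square algebra_simps)
next
  case (step d)
  let ?T = "\<lambda>d. x ^ d * y + x * y ^ d"
  obtain e where e: "d = Suc e" using step(1) by (cases d) auto
  have chebyshev: "(x + y) * ?T d \<le> 2 * ?T (Suc d)"
  proof -
    have "0 \<le> x * y * ((x ^ e - y ^ e) * (x - y))"
      using power_diff_mult_diff_nonneg[OF assms(1,2), of e] assms by simp
    then show ?thesis unfolding e by (simp add: algebra_simps)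
  qed
  have "(2::real) ^ 1 \<le> 2 ^ d" using step(1) by (intro power_increasing) auto
  then have coeff: "(1::real) \<le> 2 ^ d - 1" by simp
  have "mu x y (Suc (Suc d)) \<le> (x + y) * ((2 ^ d - 1) * ?T d) + ?T (Suc d)"
    unfolding mu_Suc[of x y "Suc d"] using mult_left_mono[OF step(3), of "x + y"] assms by simp
  also have "\<dots> = (2 ^ d - 1) * ((x + y) * ?T d) + ?T (Suc d)"
    by (simp add: algebra_simps)
  also have "\<dots> \<le> (2 ^ d - 1) * (2 * ?T (Suc d)) + ?T (Suc d)"
    using mult_left_mono[OF chebyshev, of "2 ^ d - 1"] coeff by simp
  also have "\<dots> = (2 ^ Suc d - 1) * ?T (Suc d)"
    by (simp add: algebra_simps)
  finally show ?case .
qed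

lemma omega_add_mu: "omega x y d + mu x y d = (2 ^ d - 2) * ((x + y) / 2) ^ d"
proof -
  have "(x + y) ^ d = 2 ^ d * ((x + y) / 2) ^ d" by (simp add: power_divide)
  then show ?thesis by (simp add: omega_def mu_def algebra_simps)
qed

lemma phi_add_psi: "phi x y s t + psi x y s t = 2 * ((x + y) / 2) ^ (s + t)"
  by (simp add: phi_def psi_def)

lemma omega_div_mu_eq:
  assumes "mu x y d \<noteq> 0"
  shows "omega x y d / mu x y d = (2 ^ d - 2) * ((x + y) / 2) ^ d / mu x y d - 1"
  using omega_add_mu[of x y d] assms by (simp add: field_simps)

lemma omega_div_mu_Suc_le:
  assumes "0 < x" "0 < y" "2 \<le> d"
  shows "omega x y (Suc d) / mu x y (Suc d) \<le> omega x y d / mu x y d"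
proof -
  define M where "M = (x + y) / 2"
  define T where "T = x ^ d * y + x * y ^ d"
  have M: "0 < M" using assms by (simp add: M_def)
  have mu_d: "0 < mu x y d" and mu_Sd: "0 < mu x y (Suc d)"
    using mu_pos assms by auto
  have rec: "mu x y (Suc d) = 2 * M * mu x y d + T"
    unfolding mu_Suc M_def T_def by simp
  have "(2::real) ^ 1 \<le> 2 ^ d" using assms by (intro power_increasing) auto
  then have "2 * M * mu x y d * (2 ^ d - 1) \<le> mu x y (Suc d) * (2 ^ d - 2)"
    using rec mu_Suc_le[of x y d] assms unfolding T_def by (simp add: algebra_simps)
  then have "M ^ d * (2 * M * mu x y d * (2 ^ d - 1)) \<le> M ^ d * (mu x y (Suc d) * (2 ^ d - 2))"
    using M by (intro mult_left_mono) auto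
  then have "(2 ^ Suc d - 2) * M ^ Suc d / mu x y (Suc d) \<le> (2 ^ d - 2) * M ^ d / mu x y d"
    using mu_d mu_Sd by (simp add: divide_simps algebra_simps)
  then show ?thesis
    using omega_div_mu_eq[of x y d] omega_div_mu_eq[of x y "Suc d"] mu_d mu_Sd
    unfolding M_def by simp
qed

lemma omega_div_mu_antimono:
  assumes "0 < x" "0 < y" "2 \<le> a" "a \<le> t"
  shows "omega x y t / mu x y t \<le> omega x y a / mu x y a"
  using assms(4)
proof (induction t rule: dec_induct)
  case (step d)
  then show ?case using omega_div_mu_Suc_le[of x y d] assms by simp
qed simp

lemma sum_power_one_plus_minus_Suc:
  "(1 + u) ^ Suc n + (1 - u) ^ Suc n = ((1 + u) ^ n + (1 - u) ^ n) + u * ((1 + u) ^ n - (1 - u) ^ n)"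
  for u :: real
  by (simp add: algebra_simps)

lemma diff_power_one_plus_minus_Suc:
  "(1 + u) ^ Suc n - (1 - u) ^ Suc n = ((1 + u) ^ n - (1 - u) ^ n) + u * ((1 + u) ^ n + (1 - u) ^ n)"
  for u :: real
  by (simp add: algebra_simps)

lemma sum_power_one_plus_minus_abs:
  "(1 + u) ^ n + (1 - u) ^ n = (1 + \<bar>u\<bar>) ^ n + (1 - \<bar>u\<bar>) ^ n"
  for u :: real
  by (cases "0 \<le> u") (simp_all add: add.commute)

lemma diff_power_one_plus_minus_le:
  fixes u :: real
  assumes "0 \<le> u" "u \<le> 1"
  shows "(1 + u) ^ n - (1 - u) ^ n \<le> n * u * ((1 + u) ^ n + (1 - u) ^ n)"
proof (induction n)
  case (Suc n)
  have "(1 - u) ^ n \<le> (1 + u) ^ n"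
    using assms by (intro power_mono) auto
  then have sum_mono: "(1 + u) ^ n + (1 - u) ^ n \<le> (1 + u) ^ Suc n + (1 - u) ^ Suc n"
    unfolding sum_power_one_plus_minus_Suc using assms by simp
  have "(1 + u) ^ Suc n - (1 - u) ^ Suc n \<le> Suc n * u * ((1 + u) ^ n + (1 - u) ^ n)"
    unfolding diff_power_one_plus_minus_Suc using Suc by (simp add: algebra_simps)
  also have "\<dots> \<le> Suc n * u * ((1 + u) ^ Suc n + (1 - u) ^ Suc n)"
    using sum_mono assms by (intro mult_left_mono) auto
  finally show ?case .
qed simp

lemma sum_power_one_plus_minus_le_binomial:
  fixes u :: real
  assumes "0 \<le> u" "u \<le> 1"
  shows "(1 + u) ^ n + (1 - u) ^ n \<le> 2 * (1 + u\<^sup>2) ^ (n choose 2)"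
proof (induction n)
  case (Suc n)
  have "(1 + u) ^ Suc n + (1 - u) ^ Suc n \<le> ((1 + u) ^ n + (1 - u) ^ n) + u * (n * u * ((1 + u) ^ n + (1 - u) ^ n))"
    unfolding sum_power_one_plus_minus_Suc
    using diff_power_one_plus_minus_le[OF assms, of n] assms by (intro add_left_mono mult_left_mono)
  also have "\<dots> = (1 + n * u\<^sup>2) * ((1 + u) ^ n + (1 - u) ^ n)"
    by (simp add: algebra_simps power2_eq_square)
  also have "\<dots> \<le> (1 + u\<^sup>2) ^ n * (2 * (1 + u\<^sup>2) ^ (n choose 2))"
  proof (rule mult_mono)
    have "-1 \<le> u\<^sup>2" using zero_le_power2[of u] by linarith
    then show "1 + n * u\<^sup>2 \<le> (1 + u\<^sup>2) ^ n"
      using Bernoulli_inequality[of "u\<^sup>2" n] by simp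
  qed (use Suc assms in auto)
  also have "\<dots> = 2 * (1 + u\<^sup>2) ^ (Suc n choose 2)"
    by (simp add: numeral_2_eq_2 power_add algebra_simps)
  finally show ?case .
qed simp

lemma sum_diff_power_one_plus_minus_le:
  fixes u :: real
  assumes "0 \<le> u" "u \<le> 1" "1 \<le> n"
  shows "(1 + u) ^ n + (1 - u) ^ n \<le> 2 + (2 ^ n - 2) * u\<^sup>2 \<and> (1 + u) ^ n - (1 - u) ^ n \<le> 2 ^ n * u"
  using assms(3)
proof (induction n rule: dec_induct)
  case (step n)
  then have sum: "(1 + u) ^ n + (1 - u) ^ n \<le> 2 + (2 ^ n - 2) * u\<^sup>2"
    and diff: "(1 + u) ^ n - (1 - u) ^ n \<le> 2 ^ n * u"
    by auto
  have "(2::real) ^ 1 \<le> 2 ^ n" using step(1) by (intro power_increasing) auto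
  moreover have "u\<^sup>2 \<le> 1" using assms by (simp add: power_le_one)
  ultimately have "2 + (2 ^ n - 2) * u\<^sup>2 \<le> (2::real) ^ n"
    using mult_left_mono[of "u\<^sup>2" 1 "2 ^ n - 2"] by simp
  with sum have sum_le: "(1 + u) ^ n + (1 - u) ^ n \<le> 2 ^ n" by linarith
  have "(1 + u) ^ Suc n + (1 - u) ^ Suc n \<le> 2 + (2 ^ n - 2) * u\<^sup>2 + u * (2 ^ n * u)"
    unfolding sum_power_one_plus_minus_Suc using sum mult_left_mono[OF diff assms(1)] by linarith
  moreover have "(1 + u) ^ Suc n - (1 - u) ^ Suc n \<le> 2 ^ n * u + u * 2 ^ n"
    unfolding diff_power_one_plus_minus_Suc using diff mult_left_mono[OF sum_le assms(1)] by linarith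
  ultimately show ?case by (simp add: algebra_simps power2_eq_square)
qed simp

lemma mu_centered: "mu (1 + u) (1 - u) d = 2 ^ d - ((1 + u) ^ d + (1 - u) ^ d)"
  by (simp add: mu_def)

lemma psi_centered: "psi (1 + u) (1 - u) s (s + m) = (1 - u\<^sup>2) ^ s * ((1 + u) ^ m + (1 - u) ^ m)"
proof -
  have "(1 - u\<^sup>2) ^ s = (1 + u) ^ s * (1 - u) ^ s"
    by (simp add: power2_eq_square algebra_simps flip: power_mult_distrib)
  then show ?thesis unfolding psi_def by (simp add: power_add algebra_simps)
qed

lemma psi_centered_less:
  fixes u :: real
  assumes "u \<noteq> 0" "\<bar>u\<bar> < 1" "2 \<le> a" "a \<le> s" "m choose 2 < a"
  shows "psi (1 + u) (1 - u) s (s + m) < 2 * (1 - u\<^sup>2)"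
proof -
  define v where "v = u\<^sup>2"
  define E where "E = (1 + u) ^ m + (1 - u) ^ m"
  have v: "0 < v" "v < 1"
    using assms by (auto simp: v_def abs_square_less_1)
  have E_pos: "0 < E"
    using assms unfolding E_def sum_power_one_plus_minus_abs[of u] by (intro add_pos_nonneg) auto
  have "E \<le> 2 * (1 + v) ^ (m choose 2)"
    using sum_power_one_plus_minus_le_binomial[of "\<bar>u\<bar>" m] assms
    unfolding E_def v_def sum_power_one_plus_minus_abs[of u] by simp
  also have "\<dots> \<le> 2 * (1 + v) ^ (a - 1)"
    using v assms by (intro mult_left_mono power_increasing) auto
  finally have E_le: "E \<le> 2 * (1 + v) ^ (a - 1)" .
  have "(1 - v) ^ (s - 1) * E \<le> (1 - v) ^ (a - 1) * (2 * (1 + v) ^ (a - 1))"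
    using v assms E_pos E_le by (intro mult_mono power_decreasing) auto
  also have "\<dots> = 2 * (1 - v\<^sup>2) ^ (a - 1)"
    by (simp add: power2_eq_square algebra_simps flip: power_mult_distrib)
  also have "\<dots> < 2"
  proof -
    have "0 \<le> 1 - v\<^sup>2" "1 - v\<^sup>2 < 1" using v by (simp_all add: power_le_one)
    then show ?thesis using assms by (simp add: power_less_one_iff)
  qed
  finally have "(1 - v) * ((1 - v) ^ (s - 1) * E) < (1 - v) * 2"
    using v by (intro mult_strict_left_mono) auto
  moreover have "psi (1 + u) (1 - u) s (s + m) = (1 - v) * ((1 - v) ^ (s - 1) * E)"
    unfolding psi_centered E_def v_def using assms by (cases s) auto
  ultimately show ?thesis unfolding v_def by (simp add: algebra_simps)
qed

lemma omega_div_mu_less_phi_div_psi_centered: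
  fixes u :: real
  assumes "u \<noteq> 0" "\<bar>u\<bar> < 1" "2 \<le> a" "a \<le> s" "m choose 2 < a"
  shows "omega (1 + u) (1 - u) a / mu (1 + u) (1 - u) a
    < phi (1 + u) (1 - u) s (s + m) / psi (1 + u) (1 - u) s (s + m)"
proof -
  define v where "v = u\<^sup>2"
  have v: "0 < v" "v < 1"
    using assms by (auto simp: v_def abs_square_less_1)
  have "(1 + u) ^ a + (1 - u) ^ a \<le> 2 + (2 ^ a - 2) * v"
    using sum_diff_power_one_plus_minus_le[of "\<bar>u\<bar>" a, THEN conjunct1] assms
    unfolding v_def sum_power_one_plus_minus_abs[of u] by simp
  then have mu_ge: "(2 ^ a - 2) * (1 - v) \<le> mu (1 + u) (1 - u) a"
    unfolding mu_centered by (simp add: algebra_simps)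
  have "(2::real) ^ 2 \<le> 2 ^ a" using assms by (intro power_increasing) auto
  then have coeff: "0 < (2::real) ^ a - 2" by simp
  have "0 < (2 ^ a - 2) * (1 - v)" using coeff v by simp
  with mu_ge have mu_pos: "0 < mu (1 + u) (1 - u) a" by linarith
  have psi_pos: "0 < psi (1 + u) (1 - u) s (s + m)"
    using assms unfolding psi_def abs_less_iff by (intro add_pos_pos mult_pos_pos) auto
  have "(2 ^ a - 2) / mu (1 + u) (1 - u) a \<le> 1 / (1 - v)"
    using mu_ge mu_pos coeff v by (simp add: divide_simps mult.commute)
  also have "\<dots> < 2 / psi (1 + u) (1 - u) s (s + m)"
    using psi_centered_less[OF assms] psi_pos v unfolding v_def by (simp add: divide_simps)
  finally have "(2 ^ a - 2) / mu (1 + u) (1 - u) a < 2 / psi (1 + u) (1 - u) s (s + m)" .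
  moreover have "omega (1 + u) (1 - u) a / mu (1 + u) (1 - u) a = (2 ^ a - 2) / mu (1 + u) (1 - u) a - 1"
    using omega_div_mu_eq[of "1 + u" "1 - u" a] mu_pos by simp
  moreover have "phi (1 + u) (1 - u) s (s + m) / psi (1 + u) (1 - u) s (s + m)
      = 2 / psi (1 + u) (1 - u) s (s + m) - 1"
    using phi_add_psi[of "1 + u" "1 - u" s "s + m"] psi_pos by (simp add: field_simps)
  ultimately show ?thesis by linarith
qed

lemma mu_homogeneous: "mu (c * x) (c * y) d = c ^ d * mu x y d"
  unfolding mu_def by (simp add: power_mult_distrib algebra_simps flip: distrib_left)

lemma omega_homogeneous: "omega (c * x) (c * y) d = c ^ d * omega x y d"
proof -
  have "(c * x + c * y) / 2 = c * ((x + y) / 2)" by (simp add: algebra_simps)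
  then show ?thesis
    unfolding omega_def by (simp only: power_mult_distrib) (simp add: algebra_simps)
qed

lemma psi_homogeneous: "psi (c * x) (c * y) s t = c ^ (s + t) * psi x y s t"
  unfolding psi_def by (simp add: power_mult_distrib power_add algebra_simps)

lemma phi_homogeneous: "phi (c * x) (c * y) s t = c ^ (s + t) * phi x y s t"
proof -
  have "(c * x + c * y) / 2 = c * ((x + y) / 2)" by (simp add: algebra_simps)
  then show ?thesis
    unfolding phi_def by (simp only: power_mult_distrib) (simp add: power_add algebra_simps)
qed

lemma omega_div_mu_less_phi_div_psi:
  assumes "0 < x" "0 < y" "x \<noteq> y" "2 \<le> a" "a \<le> s" "s \<le> t" "(t - s) choose 2 < a"
  shows "omega x y a / mu x y a < phi x y s t / psi x y s t"
proof -
  define M where "M = (x + y) / 2"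
  define u where "u = (x - y) / (x + y)"
  have M: "0 < M" using assms by (simp add: M_def)
  have u: "u \<noteq> 0" "\<bar>u\<bar> < 1"
    using assms by (auto simp: u_def abs_less_iff divide_simps)
  have x: "x = M * (1 + u)" and y: "y = M * (1 - u)"
    using assms by (simp_all add: M_def u_def field_simps)
  have t: "t = s + (t - s)" using assms by simp
  have "omega x y a / mu x y a = omega (1 + u) (1 - u) a / mu (1 + u) (1 - u) a"
    unfolding x y omega_homogeneous mu_homogeneous using M by simp
  also have "\<dots> < phi (1 + u) (1 - u) s t / psi (1 + u) (1 - u) s t"
    using omega_div_mu_less_phi_div_psi_centered[OF u assms(4,5,7)] t by simp
  also have "\<dots> = phi x y s t / psi x y s t"
    unfolding x y phi_homogeneous psi_homogeneous using M by simp
  finally show ?thesis .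
qed

theorem proposition3p3:
  fixes x y :: real and a b s t :: nat
  assumes "x > 0" "y > 0" "x \<noteq> y"
    and "a \<ge> 2" "b \<ge> t" "t \<ge> s" "s \<ge> a" "a > (b - a) choose 2"
  shows "omega x y t / mu x y t \<le> omega x y a / mu x y a
       \<and> omega x y a / mu x y a < phi x y s t / psi x y s t"
proof -
  have "(t - s) choose 2 \<le> (b - a) choose 2"
    using assms by (intro binomial_right_mono) linarith
  then have "(t - s) choose 2 < a" using assms by linarith
  then show ?thesis
    using omega_div_mu_antimono[of x y a t] omega_div_mu_less_phi_div_psi[of x y a s t] assms
    by auto
qed

end
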